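(* Let $f:\mathbb{R}^m\times\mathbb{R}\to\mathbb{R}^m$ be Lipschitz continuous and let $y$ solve the initial value problem $\dot y = f(y,t)$, $t\in(0,T]$, $y(0)=y_0$. Let $S$ be a linear functional on $\mathbb{R}^m$ satisfying the Lipschitz condition $|S(y_1(t))-S(y_2(t))|\le K\|y_1(t)-y_2(t)\|_{\mathbb{R}^m}$ for some constant $K>0$. Let $Y(t)$ be a continuous numerical approximation of $y$ computed with step-size $h$ such that $$\|y(t)-Y(t)\|_{\mathbb{R}^m}\le C h^p\quad\text{for all } t\in[0,T],$$ for some constant $C>0$. For a threshold value $R$, let $t_t=\min_{t\in(0,T]}\arg(S(y(t))=R)$ and $t_c=\min_{t\in(0,T]}\arg(S(Y(t))=R)$ (so that $S(y(t_t))=R=S(Y(t_c))$), and let $e_Q=t_t-t_c$. Assume that $t\mapsto S(y(t))$ is continuously differentiable in a neighborhood $B$ which contains both $t_t$ and $t_c$, and that there exists $M>0$ such that $\left|\frac{dS}{dt}(y(t))\right|>M$ for all $t\in B$. Then $$e_Q\le \widehat{C}h^p$$ for some constant $\widehat{C}$ which depends on $M$, $C$ and $K$.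
   Context: $\|\cdot\|_{\mathbb{R}^m}$ is the Euclidean norm. It is assumed that the threshold $S(y(t))=R$ is crossed at some time in $(0,T)$, so $t_t$ exists; likewise $t_c$ is the first time the computed functional reaches $R$. *)

theory Defs
  imports "HOL-Analysis.Analysis"
begin

definition first_hit :: "(real \<Rightarrow> real) \<Rightarrow> real \<Rightarrow> real \<Rightarrow> real \<Rightarrow> bool" where
  "first_hit g R T tt \<longleftrightarrow>
     tt \<in> {0<..T} \<and> g tt = R \<and> (\<forall>t\<in>{0<..T}. g t = R \<longrightarrow> tt \<le> t)"

end

theory Submission
  imports Defs
begin

text \<open>On B the signal t \<mapsto> S (y t) moves with speed greater than M, so by the mean value
  theorem |tt - tc| M \<le> |S (y tt) - S (y tc)|. Since S (y tt) = R = S (Y tc), the right-hand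
  side is |S (Y tc) - S (y tc)| \<le> K C h^p.\<close>

lemma deriv_bounded_below_imp_dist_le:
  fixes g g' :: "real \<Rightarrow> real"
  assumes "connected B" "a \<in> B" "b \<in> B"
    and deriv: "\<And>t. t \<in> B \<Longrightarrow> (g has_real_derivative g' t) (at t)"
    and speed: "\<And>t. t \<in> B \<Longrightarrow> M \<le> \<bar>g' t\<bar>"
  shows "M * \<bar>b - a\<bar> \<le> \<bar>g b - g a\<bar>"
  using assms(2,3)
proof (induction a b rule: linorder_wlog)
  case (sym a b)
  then show ?case by (simp add: abs_minus_commute)
next
  case (le a b)
  show ?case
  proof (cases "a = b")
    case False
    with le have "a < b" by simp
    have Icc_B: "{a..b} \<subseteq> B"
      using connected_contains_Icc[OF \<open>connected B\<close> le.prems] .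
    obtain z where z: "a < z" "z < b" and mvt: "g b - g a = (b - a) * g' z"
      using MVT2[OF \<open>a < b\<close>, of g g'] deriv Icc_B by fastforce
    have "z \<in> B"
      using Icc_B z by auto
    then have "M \<le> \<bar>g' z\<bar>"
      by (rule speed)
    then have "(b - a) * M \<le> (b - a) * \<bar>g' z\<bar>"
      using le by (intro mult_left_mono) auto
    then show ?thesis
      using le mvt by (simp add: abs_mult mult.commute)
  qed simp
qed

lemma crossing_time_error_le:
  fixes y Y :: "real \<Rightarrow> 'a::real_normed_vector" and S :: "'a \<Rightarrow> real"
  assumes S_lipschitz: "\<forall>a b. \<bar>S a - S b\<bar> \<le> K * norm (a - b)" and "K \<ge> 0"
    and err: "norm (y tc - Y tc) \<le> \<epsilon>"
    and hit_y: "S (y tt) = R" and hit_Y: "S (Y tc) = R"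
    and "connected B" "tt \<in> B" "tc \<in> B"
    and deriv: "\<forall>t\<in>B. ((\<lambda>s. S (y s)) has_real_derivative dS t) (at t)"
    and "M > 0" and speed: "\<forall>t\<in>B. \<bar>dS t\<bar> > M"
  shows "\<bar>tt - tc\<bar> \<le> K * \<epsilon> / M"
proof -
  have "M * \<bar>tt - tc\<bar> \<le> \<bar>S (y tt) - S (y tc)\<bar>"
    using deriv speed \<open>connected B\<close> \<open>tt \<in> B\<close> \<open>tc \<in> B\<close>
    by (intro deriv_bounded_below_imp_dist_le[where g' = dS]) (auto intro: less_imp_le)
  also have "\<dots> = \<bar>S (y tc) - S (Y tc)\<bar>"
    using hit_y hit_Y by (simp add: abs_minus_commute)
  also have "\<dots> \<le> K * norm (y tc - Y tc)"
    using S_lipschitz by blast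
  also have "\<dots> \<le> K * \<epsilon>"
    using err \<open>K \<ge> 0\<close> by (rule mult_left_mono)
  finally show ?thesis
    using \<open>M > 0\<close> by (simp add: field_simps)
qed

theorem theorem1:
  shows "\<exists>Chat :: real \<Rightarrow> real \<Rightarrow> real \<Rightarrow> real.
    \<forall>(f :: 'a::euclidean_space \<Rightarrow> real \<Rightarrow> 'a) (y :: real \<Rightarrow> 'a) (y0 :: 'a) (T :: real)
      (S :: 'a \<Rightarrow> real) (K :: real) (Y :: real \<Rightarrow> 'a) (h :: real) (p :: nat) (C :: real)
      (R :: real) (tt :: real) (tc :: real) (B :: real set) (dS :: real \<Rightarrow> real) (M :: real).
      (\<exists>L. L-lipschitz_on UNIV (\<lambda>(x, t). f x t)) \<and>
      T > 0 \<and> y 0 = y0 \<and>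
      (\<forall>t\<in>{0<..T}. (y has_vector_derivative f (y t) t) (at t within {0..T})) \<and>
      linear S \<and> K > 0 \<and> (\<forall>a b. \<bar>S a - S b\<bar> \<le> K * norm (a - b)) \<and>
      continuous_on {0..T} Y \<and> h > 0 \<and> C > 0 \<and>
      (\<forall>t\<in>{0..T}. norm (y t - Y t) \<le> C * h ^ p) \<and>
      first_hit (\<lambda>t. S (y t)) R T tt \<and>
      first_hit (\<lambda>t. S (Y t)) R T tc \<and>
      open B \<and> connected B \<and> tt \<in> B \<and> tc \<in> B \<and>
      (\<forall>t\<in>B. ((\<lambda>s. S (y s)) has_real_derivative dS t) (at t)) \<and>
      continuous_on B dS \<and>
      M > 0 \<and> (\<forall>t\<in>B. \<bar>dS t\<bar> > M)
      \<longrightarrow> tt - tc \<le> Chat M C K * h ^ p"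
proof (intro exI[of _ "\<lambda>M C K. K * C / M"] allI impI, elim conjE)
  fix y Y :: "real \<Rightarrow> 'a" and S :: "'a \<Rightarrow> real" and T K h C R tt tc M B dS and p :: nat
  assume "K > 0" and S_lipschitz: "\<forall>a b. \<bar>S a - S b\<bar> \<le> K * norm (a - b)"
    and err: "\<forall>t\<in>{0..T}. norm (y t - Y t) \<le> C * h ^ p"
    and hit_y: "first_hit (\<lambda>t. S (y t)) R T tt" and hit_Y: "first_hit (\<lambda>t. S (Y t)) R T tc"
    and B: "connected B" "tt \<in> B" "tc \<in> B"
    and deriv: "\<forall>t\<in>B. ((\<lambda>s. S (y s)) has_real_derivative dS t) (at t)"
    and speed: "M > 0" "\<forall>t\<in>B. \<bar>dS t\<bar> > M"
  have err_tc: "norm (y tc - Y tc) \<le> C * h ^ p"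
    using err hit_Y by (auto simp: first_hit_def)
  have crossings: "S (y tt) = R" "S (Y tc) = R"
    using hit_y hit_Y by (simp_all add: first_hit_def)
  have "\<bar>tt - tc\<bar> \<le> K * (C * h ^ p) / M"
    using crossing_time_error_le[where S = S and y = y and Y = Y,
        OF S_lipschitz less_imp_le[OF \<open>K > 0\<close>] err_tc crossings B deriv speed] .
  then show "tt - tc \<le> K * C / M * h ^ p"
    by simp
qed

end
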